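(* Let $(\mathrm{Block},\mathrm{Gd},\mathrm{Bd})$ be a critical tuple given as input to the Gap algorithm, let $i\in\mathbb{Z}$ with $\mathrm{Block}(i)\neq\emptyset$, and let $P$ be the set of selected elements at any stage of an arbitrary execution of the Gap algorithm. If $e\in B_{\mathcal{U}\setminus F}(\mathrm{Block}(i))\cap\mathrm{span}(B_F(\mathrm{Gd}(i)))$, then $$e\notin\mathrm{span}\big(P\cup B_F(\mathrm{Bd}(i))\big)\iff e\notin\mathrm{span}\Big(\big(P\cap B_{\mathcal{U}\setminus F}(\mathrm{Block}(i))\big)\cup B_F(\mathrm{Bd}(i))\Big).$$
   Context: $M=(\mathcal{U},\mathcal{I})$ is a matroid; $\mathrm{rank}(X)=\max\{|X'|:X'\subseteq X,X'\in\mathcal{I}\}$, $\mathrm{span}(X)=\{e:\mathrm{rank}(X\cup\{e\})=\mathrm{rank}(X)\}$. Standing assumption: elements of rank $0$ have value $0$ and every element of positive value has value $2^i$ for some $i\in\mathbb{Z}$. For $X\subseteq\mathcal{U}$: $B_X(i)=\{e\in X:\mathrm{val}(e)=2^i\}$, $B_X(I)=\bigcup_{i\in I}B_X(i)$. Logarithms base 2. $F\subseteq\mathcal{U}$ is the set of elements revealed in a first (observation) stage; afterwards the elements of $\mathcal{U}\setminus F$ are revealed one by one. Critical tuple: $(\mathrm{Block},\mathrm{Gd},\mathrm{Bd})$ where $\mathrm{Block},\mathrm{Gd},\mathrm{Bd}$ are maps from $\mathbb{Z}$ to subsets of $\mathbb{Z}$ such that for all $i\ge j$ with $\mathrm{Block}(i),\mathrm{Block}(j)$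 nonempty: (1) $i\in\mathrm{Block}(i)$; (2) if $i>j$ then either $\mathrm{Block}(i)=\mathrm{Block}(j)$ or $\min\mathrm{Block}(i)>\max\mathrm{Block}(j)$; (3) if $\mathrm{Block}(i)=\mathrm{Block}(j)$ then $\mathrm{Gd}(i)=\mathrm{Gd}(j)$ and $\mathrm{Bd}(i)=\mathrm{Bd}(j)$; (4) $\mathrm{Block}(i)\cup\mathrm{Bd}(i)\subseteq\mathrm{Gd}(i)$; (5) if $\min\mathrm{Block}(i)>\max\mathrm{Block}(j)$ then $\mathrm{Bd}(i)\subseteq\mathrm{Gd}(i)\subseteq\mathrm{Bd}(j)\subseteq\mathrm{Gd}(j)$; (6) $\max\mathrm{Block}(i)<\min\mathrm{Bd}(i)$. Gap algorithm with input a critical tuple: start with $P=\emptyset$; immediately after each $e\in\mathcal{U}\setminus F$ is revealed (elements of value $0$ are ignored), let $\ell=\log\mathrm{val}(e)$; if $\mathrm{Block}(\ell)\neq\emptyset$, $e\in\mathrm{span}(B_F(\mathrm{Gd}(\ell)))$ and $e\notin\mathrm{span}(P\cup B_F(\mathrm{Bd}(\ell)))$, then add $e$ to $P$. Output $P$. *)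

theory Defs
  imports Complex_Main
begin

definition matroid :: "'a set \<Rightarrow> 'a set set \<Rightarrow> bool" where
  "matroid U I \<longleftrightarrow> finite U \<and> (\<forall>X\<in>I. X \<subseteq> U) \<and> {} \<in> I \<and>
     (\<forall>X Y. Y \<in> I \<and> X \<subseteq> Y \<longrightarrow> X \<in> I) \<and>
     (\<forall>X Y. X \<in> I \<and> Y \<in> I \<and> card X < card Y \<longrightarrow> (\<exists>y\<in>Y - X. insert y X \<in> I))"

definition mrank :: "'a set set \<Rightarrow> 'a set \<Rightarrow> nat" where
  "mrank I X = Max {card Y | Y. Y \<subseteq> X \<and> Y \<in> I}"

definition mspan :: "'a set \<Rightarrow> 'a set set \<Rightarrow> 'a set \<Rightarrow> 'a set" where
  "mspan U I X = {e \<in> U. mrank I (insert e X) = mrank I X}"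

(* B_X(S) = elements of X whose value is 2^j for some j in S *)
definition Bset :: "('a \<Rightarrow> real) \<Rightarrow> 'a set \<Rightarrow> int set \<Rightarrow> 'a set" where
  "Bset val X S = {e \<in> X. \<exists>j\<in>S. val e = 2 powr (real_of_int j)}"

(* log val(e), an integer under the standing assumption *)
definition lvl :: "('a \<Rightarrow> real) \<Rightarrow> 'a \<Rightarrow> int" where
  "lvl val e = \<lfloor>log 2 (val e)\<rfloor>"

definition critical_tuple :: "(int \<Rightarrow> int set) \<Rightarrow> (int \<Rightarrow> int set) \<Rightarrow> (int \<Rightarrow> int set) \<Rightarrow> bool" where
  "critical_tuple Block Gd Bd \<longleftrightarrow>
    (\<forall>i j. i \<ge> j \<and> Block i \<noteq> {} \<and> Block j \<noteq> {} \<longrightarrow>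
       i \<in> Block i \<and>
       (i > j \<longrightarrow> Block i = Block j \<or> (\<forall>a\<in>Block i. \<forall>b\<in>Block j. a > b)) \<and>
       (Block i = Block j \<longrightarrow> Gd i = Gd j \<and> Bd i = Bd j) \<and>
       Block i \<union> Bd i \<subseteq> Gd i \<and>
       ((\<forall>a\<in>Block i. \<forall>b\<in>Block j. a > b) \<longrightarrow> Bd i \<subseteq> Gd i \<and> Gd i \<subseteq> Bd j \<and> Bd j \<subseteq> Gd j) \<and>
       (\<forall>a\<in>Block i. \<forall>b\<in>Bd i. a < b))"

definition gap_accepts :: "'a set \<Rightarrow> 'a set set \<Rightarrow> 'a set \<Rightarrow> ('a \<Rightarrow> real) \<Rightarrow>
    (int \<Rightarrow> int set) \<Rightarrow> (int \<Rightarrow> int set) \<Rightarrow> (int \<Rightarrow> int set) \<Rightarrow> 'a set \<Rightarrow> 'a \<Rightarrow> bool" where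
  "gap_accepts U I F val Block Gd Bd P e \<longleftrightarrow>
     val e \<noteq> 0 \<and> Block (lvl val e) \<noteq> {} \<and>
     e \<in> mspan U I (Bset val F (Gd (lvl val e))) \<and>
     e \<notin> mspan U I (P \<union> Bset val F (Bd (lvl val e)))"

fun gap_run :: "'a set \<Rightarrow> 'a set set \<Rightarrow> 'a set \<Rightarrow> ('a \<Rightarrow> real) \<Rightarrow>
    (int \<Rightarrow> int set) \<Rightarrow> (int \<Rightarrow> int set) \<Rightarrow> (int \<Rightarrow> int set) \<Rightarrow> 'a set \<Rightarrow> 'a list \<Rightarrow> 'a set" where
  "gap_run U I F val Block Gd Bd P [] = P"
| "gap_run U I F val Block Gd Bd P (e # es) =
     gap_run U I F val Block Gd Bd
       (if gap_accepts U I F val Block Gd Bd P e then insert e P else P) es"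

end

theory Submission
  imports Defs
begin

text \<open>Call the elements of \<open>P\<close> that are neither in \<open>B\<^sub>U\<^sub>\<setminus>\<^sub>F(Block i)\<close> nor spanned by
  \<open>B\<^sub>F(Bd i)\<close> the free part \<open>L\<close> of \<open>P\<close>. Throughout any run, the selected elements of
  \<open>B\<^sub>U\<^sub>\<setminus>\<^sub>F(Block i)\<close> lie in \<open>span(B\<^sub>F(Gd i))\<close> and \<open>L\<close> is independent over \<open>B\<^sub>F(Gd i)\<close>,
  i.e. \<open>rank(B\<^sub>F(Gd i) \<union> L) = rank(B\<^sub>F(Gd i)) + |L|\<close>: by the nesting of the critical tuple, an
  accepted element of a block below \<open>Block i\<close> is outside the span of \<open>B\<^sub>F(Gd i)\<close> together with
  everything selected so far, while accepted elements of blocks above \<open>Block i\<close> are spanned by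
  \<open>B\<^sub>F(Bd i)\<close>. Elements spanned by \<open>B\<^sub>F(Bd i)\<close> do not change any span containing \<open>B\<^sub>F(Bd i)\<close>,
  and by submodularity \<open>L\<close> adds exactly \<open>|L|\<close> to the rank of every subset of
  \<open>span(B\<^sub>F(Gd i))\<close>; hence it cannot decide whether \<open>e \<in> span(B\<^sub>F(Gd i))\<close> is spanned.\<close>

locale finite_matroid =
  fixes U :: "'a set" and I :: "'a set set"
  assumes matroid: "matroid U I"
begin

lemma finite_ground: "finite U"
  using matroid by (simp add: matroid_def)

lemma indep_subset_ground: "Y \<in> I \<Longrightarrow> Y \<subseteq> U"
  using matroid by (simp add: matroid_def)

lemma indep_finite: "Y \<in> I \<Longrightarrow> finite Y"
  using indep_subset_ground finite_ground finite_subset by blast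

lemma empty_indep: "{} \<in> I"
  using matroid by (simp add: matroid_def)

lemma indep_subset: "Y \<in> I \<Longrightarrow> X \<subseteq> Y \<Longrightarrow> X \<in> I"
  using matroid unfolding matroid_def by blast

lemma indep_augment: "X \<in> I \<Longrightarrow> Y \<in> I \<Longrightarrow> card X < card Y \<Longrightarrow> \<exists>y\<in>Y - X. insert y X \<in> I"
  using matroid unfolding matroid_def by blast

lemma finite_indep_cards: "finite {card Y | Y. Y \<subseteq> X \<and> Y \<in> I}"
proof -
  have "{card Y | Y. Y \<subseteq> X \<and> Y \<in> I} \<subseteq> {..card U}"
    using indep_subset_ground finite_ground card_mono by fastforce
  then show ?thesis
    using finite_subset by blast
qed

lemma card_le_mrank: "Y \<subseteq> X \<Longrightarrow> Y \<in> I \<Longrightarrow> card Y \<le> mrank I X"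
  unfolding mrank_def using finite_indep_cards by (intro Max_ge) auto

lemma mrank_basis_exists: "\<exists>B. B \<subseteq> X \<and> B \<in> I \<and> card B = mrank I X"
proof -
  have "mrank I X \<in> {card Y | Y. Y \<subseteq> X \<and> Y \<in> I}"
    unfolding mrank_def using finite_indep_cards empty_indep by (intro Max_in) auto
  then show ?thesis
    by auto
qed

lemma mrank_mono: "X \<subseteq> Y \<Longrightarrow> mrank I X \<le> mrank I Y"
  using mrank_basis_exists[of X] card_le_mrank by (metis order_trans)

lemma indep_extend_to_basis:
  "Y \<subseteq> X \<Longrightarrow> Y \<in> I \<Longrightarrow> \<exists>B. Y \<subseteq> B \<and> B \<subseteq> X \<and> B \<in> I \<and> card B = mrank I X"
proof (induction "mrank I X - card Y" arbitrary: Y rule: less_induct)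
  case less
  show ?case
  proof (cases "card Y = mrank I X")
    case True
    then show ?thesis
      using less.prems by blast
  next
    case False
    moreover have "card Y \<le> mrank I X"
      using less.prems by (rule card_le_mrank)
    ultimately have lt: "card Y < mrank I X"
      by simp
    obtain Z where Z: "Z \<subseteq> X" "Z \<in> I" "card Z = mrank I X"
      using mrank_basis_exists by blast
    obtain z where z: "z \<in> Z - Y" "insert z Y \<in> I"
      using indep_augment[OF less.prems(2) Z(2)] lt Z(3) by auto
    have "card (insert z Y) = Suc (card Y)"
      using z(1) indep_finite[OF less.prems(2)] by simp
    then have "mrank I X - card (insert z Y) < mrank I X - card Y"
      using lt by simp
    moreover have "insert z Y \<subseteq> X"
      using z(1) Z(1) less.prems(1) by auto
    ultimately obtain B where "insert z Y \<subseteq> B" "B \<subseteq> X" "B \<in> I" "card B = mrank I X"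
      using less.hyps[of "insert z Y"] z(2) by blast
    then show ?thesis
      by blast
  qed
qed

lemma mrank_submodular: "mrank I (A \<union> B) + mrank I (A \<inter> B) \<le> mrank I A + mrank I B"
proof -
  obtain C where C: "C \<subseteq> A \<inter> B" "C \<in> I" "card C = mrank I (A \<inter> B)"
    using mrank_basis_exists by blast
  obtain D where D: "C \<subseteq> D" "D \<subseteq> A \<union> B" "D \<in> I" "card D = mrank I (A \<union> B)"
    using indep_extend_to_basis[of C "A \<union> B"] C by blast
  have fin: "finite D"
    using indep_finite D(3) .
  have "card (D \<inter> A) \<le> mrank I A" "card (D \<inter> B) \<le> mrank I B"
    by (rule card_le_mrank, blast, rule indep_subset[OF D(3)], blast)+
  moreover have "card (D \<inter> A) + card (D \<inter> B) = card D + card (D \<inter> (A \<inter> B))"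
  proof -
    have "(D \<inter> A) \<union> (D \<inter> B) = D" "(D \<inter> A) \<inter> (D \<inter> B) = D \<inter> (A \<inter> B)"
      using D(2) by blast+
    then show ?thesis
      using card_Un_Int[of "D \<inter> A" "D \<inter> B"] fin by simp
  qed
  moreover have "card C \<le> card (D \<inter> (A \<inter> B))"
    using C(1) D(1) fin by (intro card_mono) auto
  ultimately show ?thesis
    using C(3) D(4) by linarith
qed

lemma mrank_insert_le: "mrank I (insert x X) \<le> Suc (mrank I X)"
proof -
  obtain D where D: "D \<subseteq> insert x X" "D \<in> I" "card D = mrank I (insert x X)"
    using mrank_basis_exists by blast
  have "card (D - {x}) \<le> mrank I X"
    using D(1) by (intro card_le_mrank indep_subset[OF D(2)]) auto
  moreover have "card D \<le> Suc (card (D - {x}))"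
    using indep_finite[OF D(2)] by (cases "x \<in> D") (simp_all add: card_Suc_Diff1)
  ultimately show ?thesis
    using D(3) by linarith
qed

lemma mrank_Un_le: "finite L \<Longrightarrow> mrank I (X \<union> L) \<le> mrank I X + card L"
proof (induction L rule: finite_induct)
  case (insert x L)
  have "mrank I (X \<union> insert x L) \<le> Suc (mrank I (X \<union> L))"
    using mrank_insert_le by simp
  then show ?case
    using insert by simp
qed simp

lemma mspan_subset_ground: "mspan U I X \<subseteq> U"
  by (auto simp: mspan_def)

lemma mem_mspanI: "x \<in> X \<Longrightarrow> x \<in> U \<Longrightarrow> x \<in> mspan U I X"
  by (simp add: mspan_def insert_absorb)

lemma mrank_insert_notin_mspan:
  "x \<in> U \<Longrightarrow> x \<notin> mspan U I X \<Longrightarrow> mrank I (insert x X) = Suc (mrank I X)"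
  using mrank_mono[of X "insert x X"] mrank_insert_le[of x X] unfolding mspan_def
  by (simp add: subset_insertI le_antisym le_Suc_eq)

lemma mspan_mono:
  assumes "X \<subseteq> Y"
  shows "mspan U I X \<subseteq> mspan U I Y"
proof
  fix e
  assume e: "e \<in> mspan U I X"
  then have "mrank I (insert e X) = mrank I X"
    by (simp add: mspan_def)
  moreover have "mrank I (insert e Y) + mrank I (Y \<inter> insert e X) \<le> mrank I Y + mrank I (insert e X)"
    using mrank_submodular[of Y "insert e X"] assms by (simp add: insert_absorb2 Un_absorb1
        Un_insert_right sup_commute)
  moreover have "mrank I X \<le> mrank I (Y \<inter> insert e X)" "mrank I Y \<le> mrank I (insert e Y)"
    using assms by (auto intro: mrank_mono)
  ultimately show "e \<in> mspan U I Y"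
    using e by (auto simp: mspan_def)
qed

lemma mrank_Un_mspan: "X \<subseteq> mspan U I G \<Longrightarrow> mrank I (G \<union> X) = mrank I G"
proof -
  assume X: "X \<subseteq> mspan U I G"
  have "finite X"
    using finite_subset[OF subset_trans[OF X mspan_subset_ground] finite_ground] .
  then show ?thesis
    using X
  proof (induction X rule: finite_induct)
    case (insert x X)
    then have "x \<in> mspan U I (G \<union> X)"
      using mspan_mono[of G "G \<union> X"] by blast
    then show ?case
      using insert by (simp add: mspan_def)
  qed simp
qed

lemma mspan_Un_absorb: "H \<subseteq> mspan U I A \<Longrightarrow> mspan U I (A \<union> H) = mspan U I A"
proof -
  assume H: "H \<subseteq> mspan U I A"
  have "H \<subseteq> mspan U I (insert e A)" for e
    using H mspan_mono[of A "insert e A"] by blast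
  then have "mrank I (insert e (A \<union> H)) = mrank I (insert e A)" for e
    using mrank_Un_mspan[of H "insert e A"] by simp
  then show ?thesis
    using mrank_Un_mspan[OF H] by (simp add: mspan_def)
qed

lemma mrank_Un_indep_over:
  assumes X: "X \<subseteq> mspan U I G" and L: "finite L"
    and indep: "mrank I (G \<union> L) = mrank I G + card L"
  shows "mrank I (X \<union> L) = mrank I X + card L"
proof -
  have "mrank I ((X \<union> L) \<union> (G \<union> X)) + mrank I ((X \<union> L) \<inter> (G \<union> X)) \<le> mrank I (X \<union> L) + mrank I (G \<union> X)"
    by (rule mrank_submodular)
  moreover have "mrank I (G \<union> X) = mrank I G"
    using mrank_Un_mspan[OF X] .
  moreover have "mrank I (G \<union> L) \<le> mrank I ((X \<union> L) \<union> (G \<union> X))"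
    by (rule mrank_mono) blast
  moreover have "mrank I X \<le> mrank I ((X \<union> L) \<inter> (G \<union> X))"
    by (rule mrank_mono) blast
  ultimately show ?thesis
    using mrank_Un_le[OF L, of X] indep by linarith
qed

lemma mspan_Un_indep_over:
  assumes "insert e A \<subseteq> mspan U I G" and "finite L"
    and "mrank I (G \<union> L) = mrank I G + card L"
  shows "e \<in> mspan U I (A \<union> L) \<longleftrightarrow> e \<in> mspan U I A"
proof -
  have "mrank I (A \<union> L) = mrank I A + card L"
    by (rule mrank_Un_indep_over[OF _ assms(2,3)]) (use assms(1) in blast)
  moreover have "mrank I (insert e A \<union> L) = mrank I (insert e A) + card L"
    by (rule mrank_Un_indep_over[OF assms])
  moreover have "e \<in> U"
    using assms(1) mspan_subset_ground by auto
  ultimately show ?thesis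
    by (simp add: mspan_def)
qed

end

lemma critical_tupleD:
  assumes "critical_tuple Block Gd Bd" "j \<le> i" "Block i \<noteq> {}" "Block j \<noteq> {}"
  shows "i \<in> Block i"
    and "j < i \<Longrightarrow> Block i = Block j \<or> (\<forall>a\<in>Block i. \<forall>b\<in>Block j. a > b)"
    and "Block i = Block j \<Longrightarrow> Gd i = Gd j"
    and "Bd i \<subseteq> Gd i"
    and "\<forall>a\<in>Block i. \<forall>b\<in>Block j. a > b \<Longrightarrow> Gd i \<subseteq> Bd j"
  using mp[OF spec[OF spec[OF assms(1)[unfolded critical_tuple_def], of i], of j]] assms(2-4)
  by blast+

lemma critical_tuple_Block_eq:
  assumes crit: "critical_tuple Block Gd Bd" and i: "Block i \<noteq> {}" and j: "Block j \<noteq> {}"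
    and ji: "j \<in> Block i"
  shows "Block j = Block i"
proof -
  have jj: "j \<in> Block j"
    using critical_tupleD(1)[OF crit order_refl j j] .
  consider "j < i" | "j = i" | "i < j"
    by linarith
  then show ?thesis
  proof cases
    case 1
    then have "Block i = Block j \<or> (\<forall>a\<in>Block i. \<forall>b\<in>Block j. a > b)"
      using critical_tupleD(2)[OF crit _ i j] by simp
    moreover have "\<not> (\<forall>a\<in>Block i. \<forall>b\<in>Block j. a > b)"
      using ji jj by (meson less_irrefl)
    ultimately show ?thesis
      by argo
  next
    case 3
    then have "Block j = Block i \<or> (\<forall>a\<in>Block j. \<forall>b\<in>Block i. a > b)"
      using critical_tupleD(2)[OF crit _ j i] by simp
    moreover have "\<not> (\<forall>a\<in>Block j. \<forall>b\<in>Block i. a > b)"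
      using ji jj by (meson less_irrefl)
    ultimately show ?thesis
      by argo
  qed simp
qed

lemma critical_tuple_Gd_eq:
  assumes crit: "critical_tuple Block Gd Bd" and i: "Block i \<noteq> {}" and j: "Block j \<noteq> {}"
    and "j \<in> Block i"
  shows "Gd j = Gd i"
proof -
  have eq: "Block j = Block i"
    using critical_tuple_Block_eq assms .
  show ?thesis
  proof (cases "j \<le> i")
    case True
    then show ?thesis
      using critical_tupleD(3)[OF crit True i j] eq by simp
  next
    case False
    then show ?thesis
      using critical_tupleD(3)[OF crit _ j i] eq by simp
  qed
qed

lemma critical_tuple_Gd_subset_Bd:
  assumes crit: "critical_tuple Block Gd Bd" and i: "Block i \<noteq> {}" and j: "Block j \<noteq> {}"
    and "j < i" "Block i \<noteq> Block j"
  shows "Gd i \<subseteq> Bd j"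
proof -
  have "\<forall>a\<in>Block i. \<forall>b\<in>Block j. a > b"
    using critical_tupleD(2)[OF crit _ i j] assms(4,5) by simp
  then show ?thesis
    using critical_tupleD(5)[OF crit _ i j] assms(4) by simp
qed

lemma Bset_mono: "S \<subseteq> T \<Longrightarrow> Bset val X S \<subseteq> Bset val X T"
  unfolding Bset_def by blast

lemma mem_Bset_iff: "val x = 2 powr real_of_int j \<Longrightarrow> x \<in> Bset val X S \<longleftrightarrow> x \<in> X \<and> j \<in> S"
  unfolding Bset_def by (auto simp: powr_inj)

lemma gap_run_invariant:
  assumes "Q P"
    and "\<And>P x. Q P \<Longrightarrow> x \<in> set xs \<Longrightarrow> gap_accepts U I F val Block Gd Bd P x \<Longrightarrow> Q (insert x P)"
  shows "Q (gap_run U I F val Block Gd Bd P xs)"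
  using assms by (induction xs arbitrary: P) auto

locale gap_setting = finite_matroid U I for U :: "'a set" and I +
  fixes F :: "'a set" and val :: "'a \<Rightarrow> real" and Block Gd Bd :: "int \<Rightarrow> int set" and i :: int
  assumes F: "F \<subseteq> U"
    and val_nonneg: "\<forall>x\<in>U. val x \<ge> 0"
    and val_pow: "\<forall>x\<in>U. val x > 0 \<longrightarrow> (\<exists>j::int. val x = 2 powr (real_of_int j))"
    and crit: "critical_tuple Block Gd Bd"
    and Block_i: "Block i \<noteq> {}"
begin

abbreviation "BGd \<equiv> Bset val F (Gd i)"
abbreviation "BBd \<equiv> Bset val F (Bd i)"
abbreviation "BBlock \<equiv> Bset val (U - F) (Block i)"

definition free_part :: "'a set \<Rightarrow> 'a set" where
  "free_part P = P - BBlock - mspan U I BBd"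

definition gap_invariant :: "'a set \<Rightarrow> bool" where
  "gap_invariant P \<longleftrightarrow> P \<subseteq> U - F \<and> P \<inter> BBlock \<subseteq> mspan U I BGd \<and>
     mrank I (BGd \<union> free_part P) = mrank I BGd + card (free_part P)"

lemma val_eq_powr_lvl: "x \<in> U \<Longrightarrow> val x \<noteq> 0 \<Longrightarrow> val x = 2 powr real_of_int (lvl val x)"
  using val_nonneg val_pow by (force simp: lvl_def)

lemma BBd_subset_BGd: "BBd \<subseteq> BGd"
  using Bset_mono critical_tupleD(4)[OF crit order_refl Block_i Block_i] .

lemma BGd_subset_mspan: "BGd \<subseteq> mspan U I BGd"
  using F by (auto simp: Bset_def intro: mem_mspanI)

lemma gap_invariant_empty: "gap_invariant {}"
  by (simp add: gap_invariant_def free_part_def)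

lemma finite_free_part: "P \<subseteq> U - F \<Longrightarrow> finite (free_part P)"
  by (rule finite_subset[OF _ finite_ground]) (auto simp: free_part_def)

lemma gap_invariant_insert:
  assumes inv: "gap_invariant P" and x: "x \<in> U - F"
    and acc: "gap_accepts U I F val Block Gd Bd P x"
  shows "gap_invariant (insert x P)"
proof -
  define l where "l = lvl val x"
  have Block_l: "Block l \<noteq> {}" and x_Gd: "x \<in> mspan U I (Bset val F (Gd l))"
    and x_Bd: "x \<notin> mspan U I (P \<union> Bset val F (Bd l))"
    using acc unfolding gap_accepts_def l_def by auto
  have x_pow: "val x = 2 powr real_of_int l"
    using acc x val_eq_powr_lvl unfolding gap_accepts_def l_def by auto
  have P: "P \<subseteq> U - F" "P \<inter> BBlock \<subseteq> mspan U I BGd"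
    and indep: "mrank I (BGd \<union> free_part P) = mrank I BGd + card (free_part P)"
    using inv unfolding gap_invariant_def by auto
  have l_in: "l \<in> Block l" and i_in: "i \<in> Block i"
    using critical_tupleD(1)[OF crit order_refl] Block_l Block_i by simp_all
  consider (same) "l \<in> Block i"
    | (above) "l \<notin> Block i" "i < l" "Block l \<noteq> Block i"
    | (below) "l \<notin> Block i" "l < i" "Block i \<noteq> Block l"
  proof (cases "l \<in> Block i")
    case False
    then have "Block l \<noteq> Block i" "l \<noteq> i"
      using l_in i_in by auto
    then consider "i < l" | "l < i"
      by linarith
    then show ?thesis
      using that(2,3) False \<open>Block l \<noteq> Block i\<close> by metis
  qed
  then show ?thesis
  proof cases
    case same
    then have "x \<in> BBlock" "x \<in> mspan U I BGd"
      using mem_Bset_iff[of val, OF x_pow] x x_Gd critical_tuple_Gd_eq[OF crit Block_i Block_l] by auto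
    moreover from this have "free_part (insert x P) = free_part P"
      by (auto simp: free_part_def)
    ultimately show ?thesis
      using inv x by (auto simp: gap_invariant_def)
  next
    case above
    have "Bset val F (Gd l) \<subseteq> BBd"
      using Bset_mono[OF critical_tuple_Gd_subset_Bd[OF crit Block_l Block_i above(2,3)]] .
    then have "x \<in> mspan U I BBd"
      using x_Gd mspan_mono by blast
    then have "free_part (insert x P) = free_part P"
      by (auto simp: free_part_def)
    moreover have "x \<notin> BBlock"
      using mem_Bset_iff[of val, OF x_pow] above(1) by blast
    ultimately show ?thesis
      using inv x by (auto simp: gap_invariant_def)
  next
    case below
    have x_Block: "x \<notin> BBlock"
      using mem_Bset_iff[of val, OF x_pow] below(1) by blast
    show ?thesis
    proof (cases "x \<in> mspan U I BBd")
      case True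
      then have "free_part (insert x P) = free_part P"
        by (auto simp: free_part_def)
      then show ?thesis
        using inv x x_Block by (auto simp: gap_invariant_def)
    next
      case False
      txt \<open>Here \<open>B\<^sub>F(Gd i) \<subseteq> B\<^sub>F(Bd l)\<close>, so the acceptance test puts \<open>x\<close> outside the span of
        \<open>B\<^sub>F(Gd i)\<close> together with the free part.\<close>
      have "BGd \<union> free_part P \<subseteq> P \<union> Bset val F (Bd l)"
        using Bset_mono[OF critical_tuple_Gd_subset_Bd[OF crit Block_i Block_l below(2,3)], of val F]
        by (auto simp: free_part_def)
      then have x_free: "x \<notin> mspan U I (BGd \<union> free_part P)"
        using x_Bd mspan_mono by blast
      then have "x \<notin> free_part P"
        using x mem_mspanI by blast
      then have "card (insert x (free_part P)) = Suc (card (free_part P))"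
        using finite_free_part[OF P(1)] by simp
      moreover have "mrank I (BGd \<union> insert x (free_part P)) = Suc (mrank I (BGd \<union> free_part P))"
        using mrank_insert_notin_mspan[OF _ x_free] x by simp
      moreover have "free_part (insert x P) = insert x (free_part P)"
        using False x_Block by (auto simp: free_part_def)
      ultimately show ?thesis
        using inv x x_Block indep by (auto simp: gap_invariant_def)
    qed
  qed
qed

lemma gap_invariant_mspan_iff:
  assumes inv: "gap_invariant P" and e: "e \<in> mspan U I BGd"
  shows "e \<in> mspan U I (P \<union> BBd) \<longleftrightarrow> e \<in> mspan U I ((P \<inter> BBlock) \<union> BBd)"
proof -
  define A where "A = (P \<inter> BBlock) \<union> BBd"
  have P: "P \<subseteq> U - F" "P \<inter> BBlock \<subseteq> mspan U I BGd"
    and indep: "mrank I (BGd \<union> free_part P) = mrank I BGd + card (free_part P)"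
    using inv unfolding gap_invariant_def by auto
  have "P \<union> BBd = (A \<union> free_part P) \<union> (P \<inter> mspan U I BBd)"
    by (auto simp: A_def free_part_def)
  also have "mspan U I \<dots> = mspan U I (A \<union> free_part P)"
    by (rule mspan_Un_absorb) (use mspan_mono[of BBd "A \<union> free_part P"] in \<open>auto simp: A_def\<close>)
  finally have "mspan U I (P \<union> BBd) = mspan U I (A \<union> free_part P)" .
  moreover have "insert e A \<subseteq> mspan U I BGd"
    using e P(2) BBd_subset_BGd BGd_subset_mspan by (auto simp: A_def)
  ultimately show ?thesis
    using mspan_Un_indep_over[OF _ finite_free_part[OF P(1)] indep] by (simp add: A_def)
qed

end

theorem lemma2:
  fixes U F :: "'a set" and I :: "'a set set" and val :: "'a \<Rightarrow> real"
    and Block Gd Bd :: "int \<Rightarrow> int set" and \<sigma> :: "'a list" and k :: nat and i :: int and e :: 'a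
  assumes M: "matroid U I"
    and F: "F \<subseteq> U"
    and val_nonneg: "\<forall>x\<in>U. val x \<ge> 0"
    and val_loop: "\<forall>x\<in>U. mrank I {x} = 0 \<longrightarrow> val x = 0"
    and val_pow: "\<forall>x\<in>U. val x > 0 \<longrightarrow> (\<exists>j::int. val x = 2 powr (real_of_int j))"
    and crit: "critical_tuple Block Gd Bd"
    and order: "distinct \<sigma>" "set \<sigma> = U - F"
    and stage: "k \<le> length \<sigma>"
    and Blk: "Block i \<noteq> {}"
    and e: "e \<in> Bset val (U - F) (Block i) \<inter> mspan U I (Bset val F (Gd i))"
  shows "let P = gap_run U I F val Block Gd Bd {} (take k \<sigma>) in
     (e \<notin> mspan U I (P \<union> Bset val F (Bd i)) \<longleftrightarrow>
      e \<notin> mspan U I ((P \<inter> Bset val (U - F) (Block i)) \<union> Bset val F (Bd i)))"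
proof -
  interpret gap_setting U I F val Block Gd Bd i
    using M F val_nonneg val_pow crit Blk by unfold_locales
  have "set (take k \<sigma>) \<subseteq> U - F"
    using order(2) set_take_subset by metis
  then have "gap_invariant P \<Longrightarrow> x \<in> set (take k \<sigma>) \<Longrightarrow> gap_accepts U I F val Block Gd Bd P x
      \<Longrightarrow> gap_invariant (insert x P)" for P x
    using gap_invariant_insert by blast
  then have inv: "gap_invariant (gap_run U I F val Block Gd Bd {} (take k \<sigma>))"
    using gap_run_invariant[where Q = gap_invariant, OF gap_invariant_empty] by blast
  have "e \<in> mspan U I BGd"
    using e by blast
  then show ?thesis
    unfolding Let_def using gap_invariant_mspan_iff[OF inv] by blast
qed

end
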